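(* Let $G$ be a torsion-free virtually nilpotent group and let $N \unlhd G$ be a maximal normal finite index nilpotent subgroup. Then every finite conjugacy class of $G$ is contained in $\mathcal{Z}(N)$. Consequently the FC-centre of $G$ equals $\mathcal{Z}(N)$.
   Context: The FC-centre of $G$ is the set of elements of $G$ whose conjugacy class in $G$ is finite. $\mathcal{Z}(N)$ denotes the centre of $N$. *)

theory Defs
  imports "HOL-Algebra.Algebra"
begin

fun lower_central :: "('a, 'b) monoid_scheme \<Rightarrow> 'a set \<Rightarrow> nat \<Rightarrow> 'a set" where
  "lower_central G H 0 = H"
| "lower_central G H (Suc n) =
     generate G {x \<otimes>\<^bsub>G\<^esub> y \<otimes>\<^bsub>G\<^esub> inv\<^bsub>G\<^esub> x \<otimes>\<^bsub>G\<^esub> inv\<^bsub>G\<^esub> y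
                 | x y. x \<in> lower_central G H n \<and> y \<in> H}"

definition nilpotent_subgroup :: "('a, 'b) monoid_scheme \<Rightarrow> 'a set \<Rightarrow> bool" where
  "nilpotent_subgroup G H \<longleftrightarrow> subgroup H G \<and> (\<exists>n. lower_central G H n = {\<one>\<^bsub>G\<^esub>})"

definition finite_index :: "('a, 'b) monoid_scheme \<Rightarrow> 'a set \<Rightarrow> bool" where
  "finite_index G H \<longleftrightarrow> subgroup H G \<and> finite (rcosets\<^bsub>G\<^esub> H)"

definition virtually_nilpotent :: "('a, 'b) monoid_scheme \<Rightarrow> bool" where
  "virtually_nilpotent G \<longleftrightarrow> (\<exists>H. finite_index G H \<and> nilpotent_subgroup G H)"

definition torsion_free :: "('a, 'b) monoid_scheme \<Rightarrow> bool" where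
  "torsion_free G \<longleftrightarrow>
     (\<forall>x \<in> carrier G. \<forall>n::nat. n > 0 \<and> x [^]\<^bsub>G\<^esub> n = \<one>\<^bsub>G\<^esub> \<longrightarrow> x = \<one>\<^bsub>G\<^esub>)"

definition conj_class :: "('a, 'b) monoid_scheme \<Rightarrow> 'a \<Rightarrow> 'a set" where
  "conj_class G g = {h \<otimes>\<^bsub>G\<^esub> g \<otimes>\<^bsub>G\<^esub> inv\<^bsub>G\<^esub> h | h. h \<in> carrier G}"

definition FC_centre :: "('a, 'b) monoid_scheme \<Rightarrow> 'a set" where
  "FC_centre G = {g \<in> carrier G. finite (conj_class G g)}"

definition centre_of :: "('a, 'b) monoid_scheme \<Rightarrow> 'a set \<Rightarrow> 'a set" where
  "centre_of G N = {z \<in> N. \<forall>n \<in> N. z \<otimes>\<^bsub>G\<^esub> n = n \<otimes>\<^bsub>G\<^esub> z}"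

end

theory Submission
  imports Defs
begin

text \<open>Let C be the centralizer of N in G. If g has finitely many conjugates, then every y in N
has a power commuting with g. Since G is torsion-free, this forces g to commute with y as soon as
the commutator b = y g y^-1 g^-1 commutes with y, because then y^k g y^-k = b^k g;
descending the lower central series of the nilpotent group N gives g \<in> C.
The subgroup C \<inter> N is central of finite index in C, so by Schur's transfer argument every
commutator of C has a trivial power, and C is abelian. Then N C is a normal nilpotent subgroup of
finite index containing N, so N C = N by maximality and C = Z(N). Conversely an element of Z(N)
has at most [G : N] conjugates.\<close>

definition centralizer :: "('a, 'b) monoid_scheme \<Rightarrow> 'a set \<Rightarrow> 'a set" where
  "centralizer G H = {x \<in> carrier G. \<forall>h \<in> H. x \<otimes>\<^bsub>G\<^esub> h = h \<otimes>\<^bsub>G\<^esub> x}"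

definition power_centralized :: "('a, 'b) monoid_scheme \<Rightarrow> 'a set \<Rightarrow> 'a \<Rightarrow> bool" where
  "power_centralized G H a \<longleftrightarrow>
     (\<forall>h \<in> H. \<exists>k::nat. 0 < k \<and> h [^]\<^bsub>G\<^esub> k \<otimes>\<^bsub>G\<^esub> a = a \<otimes>\<^bsub>G\<^esub> h [^]\<^bsub>G\<^esub> k)"

lemma finite_range_imp_repeat:
  fixes f :: "nat \<Rightarrow> 'b"
  assumes "finite (range f)"
  shows "\<exists>i k. 0 < k \<and> f (i + k) = f i"
proof -
  obtain i j where "i \<noteq> j" "f i = f j"
    using assms finite_imageD infinite_UNIV_nat unfolding inj_on_def by blast
  then show ?thesis
  proof (cases "i < j")
    case True
    then show ?thesis using \<open>f i = f j\<close> by (intro exI[of _ i] exI[of _ "j - i"]) simp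
  next
    case False
    then show ?thesis using \<open>i \<noteq> j\<close> \<open>f i = f j\<close> by (intro exI[of _ j] exI[of _ "i - j"]) simp
  qed
qed

context group
begin

lemma inv_mult_cancel [simp]: "x \<in> carrier G \<Longrightarrow> y \<in> carrier G \<Longrightarrow> inv x \<otimes> (x \<otimes> y) = y"
  by (simp add: m_assoc [symmetric])

lemma mult_inv_cancel [simp]: "x \<in> carrier G \<Longrightarrow> y \<in> carrier G \<Longrightarrow> x \<otimes> (inv x \<otimes> y) = y"
  by (simp add: m_assoc [symmetric])

lemma conj_eq_self_iff:
  assumes "g \<in> carrier G" "y \<in> carrier G"
  shows "g \<otimes> y \<otimes> inv g = y \<longleftrightarrow> g \<otimes> y = y \<otimes> g"
  using assms inv_solve_right'[of y "g \<otimes> y" g] by simp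

lemma conj_nat_pow:
  assumes "g \<in> carrier G" "y \<in> carrier G"
  shows "(g \<otimes> y \<otimes> inv g) [^] (k::nat) = g \<otimes> y [^] k \<otimes> inv g"
proof (induction k)
  case (Suc k)
  have "(g \<otimes> y \<otimes> inv g) [^] Suc k = (g \<otimes> y [^] k \<otimes> inv g) \<otimes> (g \<otimes> y \<otimes> inv g)"
    using Suc by simp
  also have "\<dots> = g \<otimes> y [^] Suc k \<otimes> inv g"
    using assms by (simp add: m_assoc)
  finally show ?case .
qed (use assms in simp)

lemma commute_inv:
  assumes "x \<in> carrier G" "y \<in> carrier G" "x \<otimes> y = y \<otimes> x"
  shows "x \<otimes> inv y = inv y \<otimes> x"
proof -
  have "inv y \<otimes> (x \<otimes> y) \<otimes> inv y = inv y \<otimes> (y \<otimes> x) \<otimes> inv y" using assms by simp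
  then have "inv y \<otimes> x = x \<otimes> inv y" using assms(1,2) by (simp add: m_assoc)
  then show ?thesis by simp
qed

lemma rcos_eq_imp_mult_inv:
  assumes "subgroup H G" "x \<in> carrier G" "y \<in> carrier G" "H #> x = H #> y"
  shows "x \<otimes> inv y \<in> H"
  using assms rcos_self[of x H] subgroup.rcos_module_imp[OF assms(1) is_group assms(3)] by simp

section \<open>Elements centralized by powers\<close>

lemma power_centralized_mult:
  assumes "H \<subseteq> carrier G" "u \<in> carrier G" "v \<in> carrier G"
    and "power_centralized G H u" "power_centralized G H v"
  shows "power_centralized G H (u \<otimes> v)"
  unfolding power_centralized_def
proof
  fix z assume "z \<in> H"
  then have z: "z \<in> carrier G" using assms(1) by blast
  obtain k l :: nat where kl: "0 < k" "z [^] k \<otimes> u = u \<otimes> z [^] k" "0 < l" "z [^] l \<otimes> v = v \<otimes> z [^] l"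
    using assms(4,5) \<open>z \<in> H\<close> unfolding power_centralized_def by blast
  have u: "z [^] (k * l) \<otimes> u = u \<otimes> z [^] (k * l)"
    using group_commutes_pow[OF kl(2), of l] z assms(2) by (simp add: nat_pow_pow)
  have v: "z [^] (k * l) \<otimes> v = v \<otimes> z [^] (k * l)"
    using group_commutes_pow[OF kl(4), of k] z assms(3) by (simp add: nat_pow_pow mult.commute)
  have "z [^] (k * l) \<otimes> (u \<otimes> v) = u \<otimes> (z [^] (k * l) \<otimes> v)"
    using u z assms(2,3) by (simp add: m_assoc [symmetric])
  also have "\<dots> = (u \<otimes> v) \<otimes> z [^] (k * l)"
    using v z assms(2,3) by (simp add: m_assoc)
  finally show "\<exists>n::nat. 0 < n \<and> z [^] n \<otimes> (u \<otimes> v) = (u \<otimes> v) \<otimes> z [^] n"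
    using kl by (intro exI[of _ "k * l"]) simp
qed

lemma power_centralized_inv:
  assumes "H \<subseteq> carrier G" "u \<in> carrier G" "power_centralized G H u"
  shows "power_centralized G H (inv u)"
  unfolding power_centralized_def
proof
  fix z assume "z \<in> H"
  then obtain k :: nat where "0 < k" "z [^] k \<otimes> u = u \<otimes> z [^] k"
    using assms(3) unfolding power_centralized_def by blast
  moreover have "z [^] k \<in> carrier G" using \<open>z \<in> H\<close> assms(1) by blast
  ultimately show "\<exists>k::nat. 0 < k \<and> z [^] k \<otimes> inv u = inv u \<otimes> z [^] k"
    using commute_inv assms(2) by blast
qed

lemma power_centralized_conj:
  assumes H: "subgroup H G" and y: "y \<in> H" and u: "u \<in> carrier G"
    and pc: "power_centralized G H u"
  shows "power_centralized G H (y \<otimes> u \<otimes> inv y)"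
  unfolding power_centralized_def
proof
  fix z assume "z \<in> H"
  have yc: "y \<in> carrier G" and zc: "z \<in> carrier G"
    using subgroup.subset[OF H] y \<open>z \<in> H\<close> by auto
  have "inv y \<otimes> z \<otimes> y \<in> H"
    using H y \<open>z \<in> H\<close> by (simp add: subgroup.m_closed subgroup.m_inv_closed)
  then obtain k :: nat where k: "0 < k" "(inv y \<otimes> z \<otimes> y) [^] k \<otimes> u = u \<otimes> (inv y \<otimes> z \<otimes> y) [^] k"
    using pc unfolding power_centralized_def by blast
  define w where "w = z [^] k"
  have wc: "w \<in> carrier G" using zc w_def by simp
  have comm: "(inv y \<otimes> w \<otimes> y) \<otimes> u = u \<otimes> (inv y \<otimes> w \<otimes> y)"
    using k(2) conj_nat_pow[of "inv y" z k] yc zc w_def by simp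
  have "w \<otimes> (y \<otimes> u \<otimes> inv y) = y \<otimes> ((inv y \<otimes> w \<otimes> y) \<otimes> u) \<otimes> inv y"
    using wc yc u by (simp add: m_assoc)
  also have "\<dots> = (y \<otimes> u \<otimes> inv y) \<otimes> w"
    unfolding comm using wc yc u by (simp add: m_assoc)
  finally show "\<exists>n::nat. 0 < n \<and> z [^] n \<otimes> (y \<otimes> u \<otimes> inv y) = (y \<otimes> u \<otimes> inv y) \<otimes> z [^] n"
    using k(1) w_def by blast
qed

lemma power_centralized_commutator:
  assumes "subgroup H G" "y \<in> H" "a \<in> carrier G" "power_centralized G H a"
  shows "power_centralized G H (y \<otimes> a \<otimes> inv y \<otimes> inv a)"
proof -
  have H: "H \<subseteq> carrier G" and "y \<in> carrier G" using assms(1,2) subgroup.subset by auto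
  then have "y \<otimes> a \<otimes> inv y \<in> carrier G" using assms(3) by simp
  then show ?thesis
    using power_centralized_mult[OF H _ _ power_centralized_conj[OF assms] power_centralized_inv[OF H assms(3,4)]]
      assms(3) by simp
qed

lemma power_centralized_if_finite_conj_class:
  assumes "H \<subseteq> carrier G" "g \<in> carrier G" "finite (conj_class G g)"
  shows "power_centralized G H g"
  unfolding power_centralized_def
proof
  fix y assume "y \<in> H"
  then have y: "y \<in> carrier G" using assms(1) by blast
  have "finite (range (\<lambda>j::nat. y [^] j \<otimes> g \<otimes> inv (y [^] j)))"
    by (rule finite_subset[OF _ assms(3)]) (auto simp: conj_class_def y)
  then obtain i k :: nat where k: "0 < k"
    and "y [^] (i + k) \<otimes> g \<otimes> inv (y [^] (i + k)) = y [^] i \<otimes> g \<otimes> inv (y [^] i)"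
    using finite_range_imp_repeat by blast
  moreover have "y [^] (i + k) = y [^] i \<otimes> y [^] k"
    using y by (simp add: nat_pow_mult)
  ultimately have "y [^] i \<otimes> (y [^] k \<otimes> g \<otimes> inv (y [^] k)) \<otimes> inv (y [^] i) = y [^] i \<otimes> g \<otimes> inv (y [^] i)"
    using y assms(2) by (simp add: inv_mult_group m_assoc)
  then have "y [^] k \<otimes> g \<otimes> inv (y [^] k) = g"
    using y assms(2) by (simp del: r_cancel_one')
  then show "\<exists>k::nat. 0 < k \<and> y [^] k \<otimes> g = g \<otimes> y [^] k"
    using k conj_eq_self_iff y assms(2) by auto
qed

lemma conj_nat_pow_eq_if_commutator_commutes:
  assumes y: "y \<in> carrier G" and a: "a \<in> carrier G" and b: "b \<in> carrier G"
    and yb: "y \<otimes> b = b \<otimes> y" and ya: "y \<otimes> a \<otimes> inv y = b \<otimes> a"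
  shows "y [^] (j::nat) \<otimes> a \<otimes> inv (y [^] j) = b [^] j \<otimes> a"
proof (induction j)
  case (Suc j)
  have ybj: "y \<otimes> b [^] j = b [^] j \<otimes> y"
    using group_commutes_pow[OF yb[symmetric] b y] by simp
  have "y [^] Suc j \<otimes> a \<otimes> inv (y [^] Suc j) = y \<otimes> (y [^] j \<otimes> a \<otimes> inv (y [^] j)) \<otimes> inv y"
    unfolding nat_pow_Suc2[OF y] using y a by (simp add: inv_mult_group m_assoc)
  also have "\<dots> = b [^] j \<otimes> (y \<otimes> a \<otimes> inv y)"
    unfolding Suc using ybj y a b by (simp add: m_assoc [symmetric])
  also have "\<dots> = b [^] Suc j \<otimes> a"
    unfolding ya using b a by (simp add: m_assoc)
  finally show ?case .
qed (use a in simp)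

lemma torsion_free_commute_if_commutator_commutes:
  assumes tf: "torsion_free G" and y: "y \<in> carrier G" and a: "a \<in> carrier G"
    and comm: "y \<otimes> (y \<otimes> a \<otimes> inv y \<otimes> inv a) = (y \<otimes> a \<otimes> inv y \<otimes> inv a) \<otimes> y"
    and k: "0 < k" "y [^] (k::nat) \<otimes> a = a \<otimes> y [^] k"
  shows "y \<otimes> a = a \<otimes> y"
proof -
  define b where "b = y \<otimes> a \<otimes> inv y \<otimes> inv a"
  have bc: "b \<in> carrier G" using y a b_def by simp
  have yb: "y \<otimes> b = b \<otimes> y" unfolding b_def by (rule comm)
  have "y \<otimes> a \<otimes> inv y = b \<otimes> a" using y a b_def by (simp add: m_assoc)
  then have "y [^] k \<otimes> a \<otimes> inv (y [^] k) = b [^] k \<otimes> a"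
    by (rule conj_nat_pow_eq_if_commutator_commutes[OF y a bc yb])
  moreover have "y [^] k \<otimes> a \<otimes> inv (y [^] k) = a"
    using conj_eq_self_iff[THEN iffD2, OF _ a k(2)] y by simp
  ultimately have "b [^] k = \<one>" using a bc by simp
  then have "b = \<one>" using tf bc k(1) unfolding torsion_free_def by blast
  then have "y \<otimes> a \<otimes> inv y = a" using \<open>y \<otimes> a \<otimes> inv y = b \<otimes> a\<close> a by simp
  then show ?thesis using conj_eq_self_iff y a by simp
qed

lemma commute_if_commutator_mem_centralizer:
  assumes tf: "torsion_free G" and y: "y \<in> H" "H \<subseteq> carrier G" and a: "a \<in> carrier G"
    and pc: "power_centralized G H a" and b: "y \<otimes> a \<otimes> inv y \<otimes> inv a \<in> centralizer G H"
  shows "y \<otimes> a = a \<otimes> y"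
proof -
  have yc: "y \<in> carrier G" using y by blast
  have "y \<otimes> (y \<otimes> a \<otimes> inv y \<otimes> inv a) = (y \<otimes> a \<otimes> inv y \<otimes> inv a) \<otimes> y"
    using b y(1) unfolding centralizer_def by auto
  moreover obtain k :: nat where "0 < k" "y [^] k \<otimes> a = a \<otimes> y [^] k"
    using pc y(1) unfolding power_centralized_def by blast
  ultimately show ?thesis
    using torsion_free_commute_if_commutator_commutes[OF tf yc a] by blast
qed

lemma lower_central_subset:
  assumes "subgroup H G"
  shows "lower_central G H i \<subseteq> H"
proof (induction i)
  case (Suc i)
  have "{x \<otimes> y \<otimes> inv x \<otimes> inv y | x y. x \<in> lower_central G H i \<and> y \<in> H} \<subseteq> H"
    using Suc assms by (auto intro!: subgroup.m_closed subgroup.m_inv_closed)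
  then show ?case using generate_subgroup_incl assms by simp
qed simp

lemma commutator_mem_lower_central:
  assumes H: "subgroup H G" and a: "a \<in> lower_central G H i" and y: "y \<in> H"
  shows "y \<otimes> a \<otimes> inv y \<otimes> inv a \<in> lower_central G H (Suc i)"
proof -
  have "a \<in> carrier G" "y \<in> carrier G"
    using lower_central_subset[OF H] subgroup.subset[OF H] a y by auto
  then have "y \<otimes> a \<otimes> inv y \<otimes> inv a = inv (a \<otimes> y \<otimes> inv a \<otimes> inv y)"
    by (simp add: inv_mult_group m_assoc)
  moreover have "inv (a \<otimes> y \<otimes> inv a \<otimes> inv y) \<in> lower_central G H (Suc i)"
    using a y by simp (blast intro: generate.inv)
  ultimately show ?thesis by simp
qed

lemma power_centralized_central_if_nilpotent:
  assumes tf: "torsion_free G" and H: "subgroup H G" and nil: "lower_central G H c = {\<one>}"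
    and "a \<in> H" and "power_centralized G H a"
  shows "a \<in> centralizer G H"
proof -
  have "\<forall>a \<in> lower_central G H n. power_centralized G H a \<longrightarrow> a \<in> centralizer G H"
    if "n \<le> c" for n
    using that
  proof (induction n rule: inc_induct)
    case base
    then show ?case using nil subgroup.subset[OF H] by (auto simp: centralizer_def)
  next
    case (step n)
    show ?case
    proof (intro ballI impI)
      fix a assume a: "a \<in> lower_central G H n" and pc: "power_centralized G H a"
      have ac: "a \<in> carrier G" using lower_central_subset[OF H] subgroup.subset[OF H] a by blast
      have "y \<otimes> a = a \<otimes> y" if y: "y \<in> H" for y
        using commute_if_commutator_mem_centralizer[OF tf y subgroup.subset[OF H] ac pc]
          step.IH commutator_mem_lower_central[OF H a y] power_centralized_commutator[OF H y ac pc]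
        by blast
      then show "a \<in> centralizer G H" unfolding centralizer_def using ac by auto
    qed
  qed
  then show ?thesis using assms(4,5) by force
qed

lemma power_centralized_centralizes_normal_nilpotent:
  assumes tf: "torsion_free G" and N: "N \<lhd> G" and nil: "lower_central G N c = {\<one>}"
    and g: "g \<in> carrier G" and pc: "power_centralized G N g"
  shows "g \<in> centralizer G N"
proof -
  have NS: "subgroup N G" using normal_imp_subgroup[OF N] .
  have "y \<otimes> g = g \<otimes> y" if y: "y \<in> N" for y
  proof -
    have yc: "y \<in> carrier G" using subgroup.subset[OF NS] y by blast
    have "y \<otimes> (g \<otimes> inv y \<otimes> inv g) \<in> N"
      using N g y subgroup.m_closed[OF NS] subgroup.m_inv_closed[OF NS] unfolding normal_inv_iff by blast
    then have "y \<otimes> g \<otimes> inv y \<otimes> inv g \<in> N" using yc g by (simp add: m_assoc)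
    then have "y \<otimes> g \<otimes> inv y \<otimes> inv g \<in> centralizer G N"
      using power_centralized_central_if_nilpotent[OF tf NS nil]
        power_centralized_commutator[OF NS y g pc] by blast
    then show ?thesis
      using commute_if_commutator_mem_centralizer[OF tf y subgroup.subset[OF NS] g pc] by blast
  qed
  then show ?thesis unfolding centralizer_def using g by auto
qed

section \<open>Centralizers and subgroups of finite index\<close>

lemma subgroup_centralizer:
  assumes "H \<subseteq> carrier G"
  shows "subgroup (centralizer G H) G"
proof (rule subgroupI)
  show "centralizer G H \<subseteq> carrier G" "centralizer G H \<noteq> {}"
    using assms by (auto simp: centralizer_def intro!: exI[of _ \<one>])
next
  fix a assume "a \<in> centralizer G H"
  then show "inv a \<in> centralizer G H"
    using assms commute_inv by (fastforce simp: centralizer_def)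
next
  fix a b assume a: "a \<in> centralizer G H" and b: "b \<in> centralizer G H"
  have "a \<otimes> b \<otimes> h = h \<otimes> (a \<otimes> b)" if h: "h \<in> H" for h
  proof -
    have c: "a \<in> carrier G" "b \<in> carrier G" "h \<in> carrier G"
      using a b h assms by (auto simp: centralizer_def)
    have "a \<otimes> b \<otimes> h = a \<otimes> (h \<otimes> b)" using b h c by (simp add: m_assoc centralizer_def)
    also have "\<dots> = h \<otimes> (a \<otimes> b)" using a h c by (simp add: m_assoc [symmetric] centralizer_def)
    finally show ?thesis .
  qed
  then show "a \<otimes> b \<in> centralizer G H" using a b by (simp add: centralizer_def)
qed

lemma conj_mem_centralizer:
  assumes N: "N \<lhd> G" and h: "h \<in> carrier G" and x: "x \<in> centralizer G N"
  shows "h \<otimes> x \<otimes> inv h \<in> centralizer G N"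
proof -
  have xc: "x \<in> carrier G" using x by (simp add: centralizer_def)
  have "h \<otimes> x \<otimes> inv h \<otimes> n = n \<otimes> (h \<otimes> x \<otimes> inv h)" if n: "n \<in> N" for n
  proof -
    have nc: "n \<in> carrier G" using n normal_imp_subgroup[OF N] subgroup.subset by blast
    have "inv h \<otimes> n \<otimes> inv (inv h) \<in> N"
      using N n inv_closed[OF h] unfolding normal_inv_iff by blast
    then have "inv h \<otimes> n \<otimes> h \<in> N" using h by simp
    then have comm: "x \<otimes> (inv h \<otimes> n \<otimes> h) = (inv h \<otimes> n \<otimes> h) \<otimes> x"
      using x by (simp add: centralizer_def)
    have "h \<otimes> x \<otimes> inv h \<otimes> n = h \<otimes> (x \<otimes> (inv h \<otimes> n \<otimes> h)) \<otimes> inv h"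
      using h xc nc by (simp add: m_assoc)
    also have "\<dots> = n \<otimes> (h \<otimes> x \<otimes> inv h)"
      unfolding comm using h xc nc by (simp add: m_assoc)
    finally show ?thesis .
  qed
  then show ?thesis using h xc by (simp add: centralizer_def)
qed

lemma normal_centralizer:
  assumes "N \<lhd> G"
  shows "centralizer G N \<lhd> G"
  unfolding normal_inv_iff
  using subgroup_centralizer[OF subgroup.subset[OF normal_imp_subgroup[OF assms]]]
    conj_mem_centralizer[OF assms] by blast

lemma centre_of_eq_centralizer_inter:
  assumes "N \<subseteq> carrier G"
  shows "centre_of G N = centralizer G N \<inter> N"
  using assms unfolding centre_of_def centralizer_def by blast

lemma finite_image_if_rcos_invariant:
  assumes H: "subgroup H G" and fin: "finite (rcosets H)"
    and invariant: "\<And>h x. h \<in> H \<Longrightarrow> x \<in> carrier G \<Longrightarrow> f (h \<otimes> x) = f x"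
  shows "finite (f ` carrier G)"
proof -
  have "finite (f ` Q)" if Q: "Q \<in> rcosets H" for Q
  proof -
    from Q obtain x where x: "x \<in> carrier G" "Q = H #> x" unfolding RCOSETS_def by auto
    have "f ` Q \<subseteq> {f x}"
    proof
      fix y assume "y \<in> f ` Q"
      then obtain h where "h \<in> H" "y = f (h \<otimes> x)" using x(2) unfolding r_coset_def by auto
      then show "y \<in> {f x}" using invariant x(1) by simp
    qed
    then show ?thesis by (rule finite_subset) simp
  qed
  moreover have "f ` carrier G = (\<Union>Q \<in> rcosets H. f ` Q)"
    unfolding rcosets_part_G[OF H, symmetric] by (rule image_Union)
  ultimately show ?thesis using fin by simp
qed

lemma finite_index_mono:
  assumes M: "subgroup M G" and "N \<subseteq> M" and N: "finite_index G N"
  shows "finite_index G M"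
proof -
  have "M #> (n \<otimes> x) = M #> x" if n: "n \<in> N" and x: "x \<in> carrier G" for n x
  proof -
    have "n \<in> M" "n \<in> carrier G" using n assms(2) subgroup.subset[OF M] by auto
    then have "M #> n = M" using coset_join2[OF _ M] by simp
    then show ?thesis using coset_mult_assoc[OF subgroup.subset[OF M] \<open>n \<in> carrier G\<close> x] by simp
  qed
  then have "finite ((\<lambda>x. M #> x) ` carrier G)"
    using N unfolding finite_index_def by (intro finite_image_if_rcos_invariant) auto
  moreover have "rcosets M = (\<lambda>x. M #> x) ` carrier G" unfolding RCOSETS_def by blast
  ultimately show ?thesis using M unfolding finite_index_def by simp
qed

lemma finite_conj_class_if_centralizes:
  assumes N: "N \<lhd> G" and fin: "finite (rcosets N)" and z: "z \<in> centralizer G N"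
  shows "finite (conj_class G z)"
proof -
  have zc: "z \<in> carrier G" using z by (simp add: centralizer_def)
  have "(n \<otimes> h) \<otimes> z \<otimes> inv (n \<otimes> h) = h \<otimes> z \<otimes> inv h"
    if n: "n \<in> N" and h: "h \<in> carrier G" for n h
  proof -
    have nc: "n \<in> carrier G" using n normal_imp_subgroup[OF N] subgroup.subset by blast
    have "h \<otimes> z \<otimes> inv h \<in> centralizer G N" using conj_mem_centralizer[OF N h z] .
    then have "n \<otimes> (h \<otimes> z \<otimes> inv h) \<otimes> inv n = h \<otimes> z \<otimes> inv h"
      using n nc h zc conj_eq_self_iff by (simp add: centralizer_def)
    then show ?thesis using nc h zc by (simp add: inv_mult_group m_assoc)
  qed
  then have "finite ((\<lambda>h. h \<otimes> z \<otimes> inv h) ` carrier G)"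
    by (intro finite_image_if_rcos_invariant[OF normal_imp_subgroup[OF N] fin])
  moreover have "conj_class G z = (\<lambda>h. h \<otimes> z \<otimes> inv h) ` carrier G"
    unfolding conj_class_def by blast
  ultimately show ?thesis by simp
qed

lemma finite_index_pow_mem:
  assumes H: "subgroup H G" and fin: "finite (rcosets H)" and x: "x \<in> carrier G"
  shows "\<exists>k::nat. 0 < k \<and> x [^] k \<in> H"
proof -
  have "finite (range (\<lambda>j::nat. H #> x [^] j))"
    using rcosetsI[OF subgroup.subset[OF H]] x by (intro finite_subset[OF _ fin]) auto
  then obtain i k :: nat where k: "0 < k" "H #> x [^] (i + k) = H #> x [^] i"
    using finite_range_imp_repeat by blast
  then have "x [^] (i + k) \<otimes> inv (x [^] i) \<in> H" using rcos_eq_imp_mult_inv H x by simp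
  moreover have "x [^] (i + k) = x [^] k \<otimes> x [^] i" using x by (simp add: nat_pow_mult add.commute)
  ultimately have "x [^] k \<in> H" using x by (simp add: m_assoc)
  then show ?thesis using k(1) by blast
qed

lemma torsion_free_subgroup:
  assumes "torsion_free G" "subgroup H G"
  shows "torsion_free (G\<lparr>carrier := H\<rparr>)"
  using assms subgroup.subset[OF assms(2)] unfolding torsion_free_def
  by (simp add: nat_pow_consistent [symmetric] subset_iff)

lemma finite_rcosets_inter:
  assumes H: "subgroup H G" and K: "subgroup K G" and fin: "finite (rcosets H)"
  shows "finite (RCOSETS (G\<lparr>carrier := K\<rparr>) (H \<inter> K))"
proof -
  have coset_inter: "(H \<inter> K) #> x = (H #> x) \<inter> K" if x: "x \<in> K" for x
  proof
    show "(H \<inter> K) #> x \<subseteq> (H #> x) \<inter> K"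
      using x K by (auto simp: r_coset_def subgroup.m_closed)
    show "(H #> x) \<inter> K \<subseteq> (H \<inter> K) #> x"
    proof
      fix y assume y: "y \<in> (H #> x) \<inter> K"
      then obtain h where h: "h \<in> H" "y = h \<otimes> x" unfolding r_coset_def by blast
      have "h \<in> carrier G" "x \<in> carrier G"
        using h x subgroup.subset[OF H] subgroup.subset[OF K] by auto
      then have "h = y \<otimes> inv x" using h by (simp add: m_assoc)
      then have "h \<in> K" using y x K by (simp add: subgroup.m_closed subgroup.m_inv_closed)
      then show "y \<in> (H \<inter> K) #> x" using h unfolding r_coset_def by blast
    qed
  qed
  have "RCOSETS (G\<lparr>carrier := K\<rparr>) (H \<inter> K) \<subseteq> (\<lambda>Q. Q \<inter> K) ` (rcosets H)"
  proof
    fix Q assume "Q \<in> RCOSETS (G\<lparr>carrier := K\<rparr>) (H \<inter> K)"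
    then obtain x where x: "x \<in> K" "Q = (H \<inter> K) #> x" unfolding RCOSETS_def by auto
    then have "Q = (H #> x) \<inter> K" using coset_inter by simp
    moreover have "H #> x \<in> rcosets H"
      using rcosetsI[OF subgroup.subset[OF H]] subgroup.subset[OF K] x(1) by blast
    ultimately show "Q \<in> (\<lambda>Q. Q \<inter> K) ` (rcosets H)" by blast
  qed
  then show ?thesis using fin finite_surj by blast
qed

end

section \<open>Schur's theorem via the transfer\<close>

locale central_finite_index = group +
  fixes A :: "'a set"
  assumes subgroup_A: "subgroup A G"
    and central_A: "\<And>a x. a \<in> A \<Longrightarrow> x \<in> carrier G \<Longrightarrow> a \<otimes> x = x \<otimes> a"
    and finite_rcosets_A: "finite (rcosets A)"
begin

definition coset_rep :: "'a set \<Rightarrow> 'a" where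
  "coset_rep Q = (SOME x. x \<in> Q)"

definition transfer_factor :: "'a \<Rightarrow> 'a set \<Rightarrow> 'a" where
  "transfer_factor c Q = coset_rep Q \<otimes> c \<otimes> inv (coset_rep (Q #> c))"

definition transfer :: "'a \<Rightarrow> 'a" where
  "transfer c = finprod (G\<lparr>carrier := A\<rparr>) (transfer_factor c) (rcosets A)"

lemma comm_group_A: "comm_group (G\<lparr>carrier := A\<rparr>)"
  by (rule group.group_comm_groupI[OF subgroup_imp_group[OF subgroup_A]])
     (auto intro: central_A subgroup.mem_carrier[OF subgroup_A])

lemma rcosets_subset_carrier: "Q \<in> rcosets A \<Longrightarrow> Q \<subseteq> carrier G"
  using subgroup.rcosets_carrier[OF subgroup_A is_group] .

lemma coset_rep:
  assumes "Q \<in> rcosets A"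
  shows "coset_rep Q \<in> carrier G" and "A #> coset_rep Q = Q"
proof -
  obtain x where x: "x \<in> carrier G" "Q = A #> x" using assms unfolding RCOSETS_def by auto
  then have "x \<in> Q" using rcos_self subgroup_A by simp
  then have "coset_rep Q \<in> Q" unfolding coset_rep_def by (rule someI)
  then show "coset_rep Q \<in> carrier G" using rcosets_subset_carrier[OF assms] by blast
  show "A #> coset_rep Q = Q"
    using repr_independence[OF _ x(1) subgroup_A] \<open>coset_rep Q \<in> Q\<close> x(2) by simp
qed

lemma rcos_mem_rcosets:
  assumes "Q \<in> rcosets A" "c \<in> carrier G"
  shows "Q #> c \<in> rcosets A"
proof -
  have "Q #> c = A #> (coset_rep Q \<otimes> c)"
    using coset_rep[OF assms(1)] coset_mult_assoc subgroup.subset[OF subgroup_A] assms(2) by metis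
  then show ?thesis
    using rcosetsI subgroup.subset[OF subgroup_A] coset_rep(1)[OF assms(1)] assms(2) by simp
qed

lemma bij_betw_rcos: "c \<in> carrier G \<Longrightarrow> bij_betw (\<lambda>Q. Q #> c) (rcosets A) (rcosets A)"
  by (rule bij_betwI[where g = "\<lambda>Q. Q #> inv c"])
     (auto simp: rcos_mem_rcosets coset_mult_assoc rcosets_subset_carrier)

lemma transfer_factor_mem:
  assumes Q: "Q \<in> rcosets A" and c: "c \<in> carrier G"
  shows "transfer_factor c Q \<in> A"
proof -
  define r s where "r = coset_rep Q" and "s = coset_rep (Q #> c)"
  have rc: "r \<in> carrier G" and sc: "s \<in> carrier G"
    using coset_rep(1) Q c rcos_mem_rcosets r_def s_def by auto
  have "A #> s = A #> (r \<otimes> c)"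
    using coset_rep(2)[OF Q] coset_rep(2)[OF rcos_mem_rcosets[OF Q c]] r_def s_def
      coset_mult_assoc[OF subgroup.subset[OF subgroup_A] rc c] by simp
  then have "r \<otimes> c \<in> A #> s" using rcos_self[OF _ subgroup_A] rc c by simp
  then show ?thesis
    unfolding transfer_factor_def r_def[symmetric] s_def[symmetric]
    using subgroup.rcos_module_imp[OF subgroup_A is_group sc] by blast
qed

lemma transfer_factor_mult:
  assumes Q: "Q \<in> rcosets A" and c: "c \<in> carrier G" and d: "d \<in> carrier G"
  shows "transfer_factor (c \<otimes> d) Q = transfer_factor c Q \<otimes> transfer_factor d (Q #> c)"
proof -
  have "Q #> c #> d = Q #> (c \<otimes> d)"
    using coset_mult_assoc rcosets_subset_carrier[OF Q] c d by simp
  moreover have "coset_rep Q \<in> carrier G" "coset_rep (Q #> c) \<in> carrier G"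
    "coset_rep (Q #> c #> d) \<in> carrier G"
    using coset_rep(1) rcos_mem_rcosets Q c d by auto
  ultimately show ?thesis using c d unfolding transfer_factor_def by (simp add: m_assoc)
qed

lemma transfer_mem:
  assumes "c \<in> carrier G"
  shows "transfer c \<in> A"
proof -
  interpret A: comm_group "G\<lparr>carrier := A\<rparr>" by (rule comm_group_A)
  show ?thesis
    unfolding transfer_def using A.finprod_closed[of "transfer_factor c" "rcosets A"]
      transfer_factor_mem assms by auto
qed

lemma transfer_mult:
  assumes c: "c \<in> carrier G" and d: "d \<in> carrier G"
  shows "transfer (c \<otimes> d) = transfer c \<otimes> transfer d"
proof -
  interpret A: comm_group "G\<lparr>carrier := A\<rparr>" by (rule comm_group_A)
  have fac: "transfer_factor c \<in> rcosets A \<rightarrow> A" "(\<lambda>Q. transfer_factor d (Q #> c)) \<in> rcosets A \<rightarrow> A"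
    using transfer_factor_mem rcos_mem_rcosets c d by auto
  have "transfer (c \<otimes> d) = finprod (G\<lparr>carrier := A\<rparr>)
      (\<lambda>Q. transfer_factor c Q \<otimes> transfer_factor d (Q #> c)) (rcosets A)"
    unfolding transfer_def using fac
    by (intro A.finprod_cong') (auto simp: transfer_factor_mult c d intro: subgroup.m_closed[OF subgroup_A])
  also have "\<dots> = transfer c \<otimes> finprod (G\<lparr>carrier := A\<rparr>) (\<lambda>Q. transfer_factor d (Q #> c)) (rcosets A)"
    unfolding transfer_def using fac
      A.finprod_multf[where f = "transfer_factor c" and g = "\<lambda>Q. transfer_factor d (Q #> c)"]
    by simp
  also have "finprod (G\<lparr>carrier := A\<rparr>) (\<lambda>Q. transfer_factor d (Q #> c)) (rcosets A) = transfer d"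
    using A.finprod_reindex[of "transfer_factor d" "\<lambda>Q. Q #> c" "rcosets A"]
      bij_betw_rcos[OF c] transfer_factor_mem[OF _ d]
    unfolding transfer_def bij_betw_def by (simp add: Pi_def)
  finally show ?thesis .
qed

lemma transfer_central:
  assumes a: "a \<in> A"
  shows "transfer a = a [^] card (rcosets A)"
proof -
  interpret A: comm_group "G\<lparr>carrier := A\<rparr>" by (rule comm_group_A)
  have ac: "a \<in> carrier G" using a subgroup.subset[OF subgroup_A] by blast
  have "transfer_factor a Q = a" if Q: "Q \<in> rcosets A" for Q
  proof -
    define r where "r = coset_rep Q"
    have rc: "r \<in> carrier G" and Qr: "Q = A #> r" using coset_rep Q r_def by auto
    have "Q #> a = A #> (a \<otimes> r)"
      unfolding Qr using coset_mult_assoc[OF subgroup.subset[OF subgroup_A] rc ac]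
        central_A[OF a rc] by simp
    also have "\<dots> = Q"
      unfolding Qr using coset_mult_assoc[OF subgroup.subset[OF subgroup_A] ac rc, symmetric]
        coset_join2[OF ac subgroup_A a] by simp
    finally have "coset_rep (Q #> a) = r" using r_def by simp
    moreover have "r \<otimes> a \<otimes> inv r = a \<otimes> r \<otimes> inv r" using central_A[OF a rc] by simp
    then have "r \<otimes> a \<otimes> inv r = a" using rc ac by (simp add: m_assoc)
    ultimately show ?thesis
      unfolding transfer_factor_def r_def[symmetric] by simp
  qed
  then have "transfer a = finprod (G\<lparr>carrier := A\<rparr>) (\<lambda>Q. a) (rcosets A)"
    unfolding transfer_def using a by (intro A.finprod_cong') auto
  also have "\<dots> = a [^] card (rcosets A)"
    using A.finprod_const[of a "rcosets A"] a nat_pow_consistent by simp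
  finally show ?thesis .
qed

lemma transfer_nat_pow:
  assumes "c \<in> carrier G"
  shows "transfer (c [^] (n::nat)) = transfer c [^] n"
proof (induction n)
  case 0
  then show ?case using transfer_central[OF subgroup.one_closed[OF subgroup_A]] by simp
next
  case (Suc n)
  then show ?case using transfer_mult[OF nat_pow_closed[OF assms] assms] by simp
qed

theorem comm_group_if_torsion_free:
  assumes tf: "torsion_free G"
  shows "comm_group G"
proof (rule group_comm_groupI)
  fix x y assume x: "x \<in> carrier G" and y: "y \<in> carrier G"
  define e where "e = x \<otimes> y \<otimes> inv x \<otimes> inv y"
  have ec: "e \<in> carrier G" using x y e_def by simp
  have xy: "x \<otimes> y = e \<otimes> (y \<otimes> x)" using x y e_def by (simp add: m_assoc)
  have "transfer x \<otimes> transfer y = transfer y \<otimes> transfer x"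
    using central_A[OF transfer_mem[OF x]] transfer_mem[OF y] subgroup.subset[OF subgroup_A] by blast
  then have "transfer (x \<otimes> y) = transfer (y \<otimes> x)" using transfer_mult x y by simp
  then have "transfer e \<otimes> transfer (y \<otimes> x) = transfer (y \<otimes> x)"
    using transfer_mult[OF ec m_closed[OF y x]] xy by simp
  then have "transfer e = \<one>"
    using transfer_mem ec x y subgroup.subset[OF subgroup_A] by (metis m_closed r_cancel_one subsetD)
  obtain k :: nat where k: "0 < k" "e [^] k \<in> A"
    using finite_index_pow_mem[OF subgroup_A finite_rcosets_A ec] by blast
  have "rcosets A \<noteq> {}"
    using rcosetsI[OF subgroup.subset[OF subgroup_A] one_closed] by blast
  then have "0 < card (rcosets A)" using finite_rcosets_A by (simp add: card_gt_0_iff)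
  moreover have "e [^] (k * card (rcosets A)) = \<one>"
    using transfer_central[OF k(2)] transfer_nat_pow[OF ec, of k] \<open>transfer e = \<one>\<close> ec
    by (simp add: nat_pow_pow)
  ultimately have "e = \<one>" using tf ec k(1) unfolding torsion_free_def by (meson mult_pos_pos)
  then show "x \<otimes> y = y \<otimes> x" using xy x y by simp
qed

end

context group
begin

section \<open>The product of N with its centralizer\<close>

lemma centralizer_commute:
  assumes tf: "torsion_free G" and N: "subgroup N G" and fin: "finite (rcosets N)"
    and x: "x \<in> centralizer G N" and y: "y \<in> centralizer G N"
  shows "x \<otimes> y = y \<otimes> x"
proof -
  let ?C = "centralizer G N"
  have C: "subgroup ?C G" using subgroup_centralizer subgroup.subset[OF N] by blast
  have "central_finite_index (G\<lparr>carrier := ?C\<rparr>) (N \<inter> ?C)"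
  proof (intro central_finite_index.intro central_finite_index_axioms.intro)
    show "group (G\<lparr>carrier := ?C\<rparr>)" using subgroup_imp_group[OF C] .
    show "subgroup (N \<inter> ?C) (G\<lparr>carrier := ?C\<rparr>)"
      using subgroup_incl[OF subgroups_Inter_pair[OF N C] C] by blast
    show "finite (RCOSETS (G\<lparr>carrier := ?C\<rparr>) (N \<inter> ?C))"
      using finite_rcosets_inter[OF N C fin] .
    fix a z assume "a \<in> N \<inter> ?C" "z \<in> carrier (G\<lparr>carrier := ?C\<rparr>)"
    then show "a \<otimes>\<^bsub>G\<lparr>carrier := ?C\<rparr>\<^esub> z = z \<otimes>\<^bsub>G\<lparr>carrier := ?C\<rparr>\<^esub> a"
      unfolding centralizer_def by simp
  qed
  then have "comm_group (G\<lparr>carrier := ?C\<rparr>)"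
    using central_finite_index.comm_group_if_torsion_free torsion_free_subgroup[OF tf C] by blast
  then show ?thesis
    using comm_monoid.m_comm[OF comm_group.axioms(1), of "G\<lparr>carrier := ?C\<rparr>" x y] x y by simp
qed

lemma subset_set_mult_left:
  "S \<subseteq> carrier G \<Longrightarrow> \<one> \<in> K \<Longrightarrow> S \<subseteq> S <#> K"
  unfolding set_mult_def by (force intro: exI[of _ \<one>])

lemma subset_set_mult_right:
  "S \<subseteq> carrier G \<Longrightarrow> \<one> \<in> H \<Longrightarrow> S \<subseteq> H <#> S"
  unfolding set_mult_def by (force intro: exI[of _ \<one>])

lemma commutator_mult_centralizing:
  assumes "a \<in> carrier G" "n \<in> carrier G" "c \<in> carrier G" "c' \<in> carrier G"
    and "c \<otimes> n = n \<otimes> c" "c \<otimes> c' = c' \<otimes> c" "c' \<otimes> a = a \<otimes> c'"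
  shows "(a \<otimes> c) \<otimes> (n \<otimes> c') \<otimes> inv (a \<otimes> c) \<otimes> inv (n \<otimes> c') = a \<otimes> n \<otimes> inv a \<otimes> inv n"
proof -
  have c: "c \<otimes> (n \<otimes> c') = (n \<otimes> c') \<otimes> c"
    using assms by (metis m_assoc)
  have c': "c' \<otimes> inv a = inv a \<otimes> c'" using commute_inv assms by blast
  have "(a \<otimes> c) \<otimes> (n \<otimes> c') \<otimes> inv (a \<otimes> c) \<otimes> inv (n \<otimes> c')
      = a \<otimes> ((c \<otimes> (n \<otimes> c')) \<otimes> (inv c \<otimes> (inv a \<otimes> (inv c' \<otimes> inv n))))"
    using assms by (simp add: m_assoc inv_mult_group)
  also have "\<dots> = a \<otimes> (n \<otimes> ((c' \<otimes> inv a) \<otimes> (inv c' \<otimes> inv n)))"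
    unfolding c using assms by (simp add: m_assoc)
  also have "\<dots> = a \<otimes> n \<otimes> inv a \<otimes> inv n"
    unfolding c' using assms by (simp add: m_assoc)
  finally show ?thesis .
qed

lemma lower_central_set_mult_subset:
  assumes N: "subgroup N G" and C: "subgroup C G" and CN: "C \<subseteq> centralizer G N"
    and abelian: "\<And>x y. x \<in> C \<Longrightarrow> y \<in> C \<Longrightarrow> x \<otimes> y = y \<otimes> x"
  shows "lower_central G (N <#> C) (Suc i) \<subseteq> lower_central G N (Suc i)"
proof -
  let ?comm = "\<lambda>U V. {x \<otimes> y \<otimes> inv x \<otimes> inv y | x y. x \<in> U \<and> y \<in> V}"
  have Nc: "N \<subseteq> carrier G" and Cc: "C \<subseteq> carrier G" using N C subgroup.subset by auto
  have comm: "?comm U (N <#> C) \<subseteq> ?comm V N" if UV: "U \<subseteq> V <#> C" and VN: "V \<subseteq> N" for U V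
  proof
    fix w assume "w \<in> ?comm U (N <#> C)"
    then obtain a c n c' where w: "w = (a \<otimes> c) \<otimes> (n \<otimes> c') \<otimes> inv (a \<otimes> c) \<otimes> inv (n \<otimes> c')"
      and "a \<in> V" "c \<in> C" "n \<in> N" "c' \<in> C"
      using UV unfolding set_mult_def by blast
    moreover have "a \<in> N" using \<open>a \<in> V\<close> VN by blast
    moreover have "c \<in> centralizer G N" "c' \<in> centralizer G N"
      using \<open>c \<in> C\<close> \<open>c' \<in> C\<close> CN by auto
    ultimately have "w = a \<otimes> n \<otimes> inv a \<otimes> inv n"
      using commutator_mult_centralizing[of a n c c'] abelian[of c c'] Nc Cc
      unfolding centralizer_def by auto
    then show "w \<in> ?comm V N" using \<open>a \<in> V\<close> \<open>n \<in> N\<close> by blast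
  qed
  have "lower_central G (N <#> C) j \<subseteq> lower_central G N j <#> C" for j
  proof (induction j)
    case (Suc j)
    have "lower_central G (N <#> C) (Suc j) \<subseteq> lower_central G N (Suc j)"
      using mono_generate[OF comm[OF Suc lower_central_subset[OF N]]] by simp
    also have "\<dots> \<subseteq> lower_central G N (Suc j) <#> C"
      using subset_set_mult_left lower_central_subset[OF N] Nc subgroup.one_closed[OF C] by blast
    finally show ?case .
  qed simp
  then show ?thesis
    using mono_generate[OF comm[OF _ lower_central_subset[OF N]]] by simp
qed

lemma nilpotent_subgroup_set_mult:
  assumes N: "N \<lhd> G" "nilpotent_subgroup G N" and C: "subgroup C G" "C \<subseteq> centralizer G N"
    and abelian: "\<And>x y. x \<in> C \<Longrightarrow> y \<in> C \<Longrightarrow> x \<otimes> y = y \<otimes> x"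
  shows "nilpotent_subgroup G (N <#> C)"
proof -
  have NS: "subgroup N G" using normal_imp_subgroup[OF N(1)] .
  obtain c where nil: "lower_central G N c = {\<one>}"
    using N(2) unfolding nilpotent_subgroup_def by blast
  have "{x \<otimes> y \<otimes> inv x \<otimes> inv y | x y. x \<in> lower_central G N c \<and> y \<in> N} \<subseteq> {\<one>}"
    using nil subgroup.subset[OF NS] by auto
  then have "lower_central G N (Suc c) \<subseteq> {\<one>}"
    using generate_subgroup_incl[OF _ triv_subgroup] by simp
  then have "lower_central G (N <#> C) (Suc c) = {\<one>}"
    using lower_central_set_mult_subset[OF NS C abelian] generate.one by fastforce
  moreover have "subgroup (N <#> C) G"
    using second_isomorphism_grp.normal_set_mult_subgroup N(1) C(1)
    unfolding second_isomorphism_grp_def second_isomorphism_grp_axioms_def by blast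
  ultimately show ?thesis unfolding nilpotent_subgroup_def by blast
qed

lemma finite_conj_class_imp_mem_centralizer:
  assumes tf: "torsion_free G" and N: "N \<lhd> G" "nilpotent_subgroup G N"
    and g: "g \<in> carrier G" "finite (conj_class G g)"
  shows "g \<in> centralizer G N"
proof -
  obtain c where "lower_central G N c = {\<one>}"
    using N(2) unfolding nilpotent_subgroup_def by blast
  moreover have "power_centralized G N g"
    using power_centralized_if_finite_conj_class[OF _ g] normal_imp_subgroup[OF N(1)] subgroup.subset
    by blast
  ultimately show ?thesis
    using power_centralized_centralizes_normal_nilpotent[OF tf N(1) _ g(1)] by blast
qed

lemma set_mult_centralizer_normal_finite_index_nilpotent:
  assumes tf: "torsion_free G" and N: "N \<lhd> G" "finite_index G N" "nilpotent_subgroup G N"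
  shows "N <#> centralizer G N \<lhd> G" and "finite_index G (N <#> centralizer G N)"
    and "nilpotent_subgroup G (N <#> centralizer G N)"
proof -
  have NS: "subgroup N G" and C: "centralizer G N \<lhd> G"
    using normal_imp_subgroup[OF N(1)] normal_centralizer[OF N(1)] by auto
  show normal: "N <#> centralizer G N \<lhd> G"
    using normal_subgroup_set_mult_closed[OF N(1) C] .
  have "N \<subseteq> N <#> centralizer G N"
    using subset_set_mult_left[OF subgroup.subset[OF NS] subgroup.one_closed[OF normal_imp_subgroup[OF C]]] .
  then show "finite_index G (N <#> centralizer G N)"
    using finite_index_mono[OF normal_imp_subgroup[OF normal] _ N(2)] by blast
  show "nilpotent_subgroup G (N <#> centralizer G N)"
    using nilpotent_subgroup_set_mult[OF N(1,3) normal_imp_subgroup[OF C] subset_refl]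
      centralizer_commute[OF tf NS] N(2) unfolding finite_index_def by blast
qed

end

theorem lemma3p2:
  fixes G (structure) and N :: "'a set"
  assumes "group G"
    and "torsion_free G"
    and "virtually_nilpotent G"
    and "N \<lhd> G" and "finite_index G N" and "nilpotent_subgroup G N"
    and "\<And>M. \<lbrakk>M \<lhd> G; finite_index G M; nilpotent_subgroup G M; N \<subseteq> M\<rbrakk> \<Longrightarrow> M = N"
  shows "(\<forall>g \<in> carrier G. finite (conj_class G g) \<longrightarrow> conj_class G g \<subseteq> centre_of G N)
         \<and> FC_centre G = centre_of G N"
proof -
  interpret group G by fact
  let ?C = "centralizer G N"
  have N: "subgroup N G" and fin: "finite (rcosets N)"
    using assms(4,5) normal_imp_subgroup unfolding finite_index_def by auto
  have "N <#> ?C = N"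
    using assms(7) set_mult_centralizer_normal_finite_index_nilpotent[OF assms(2,4,5,6)]
      subset_set_mult_left[OF subgroup.subset[OF N] subgroup.one_closed[OF subgroup_centralizer]]
      subgroup.subset[OF N] by blast
  then have "?C \<subseteq> N"
    using subset_set_mult_right[OF _ subgroup.one_closed[OF N], of ?C] by (simp add: centralizer_def)
  then have centre: "centre_of G N = ?C"
    using centre_of_eq_centralizer_inter[OF subgroup.subset[OF N]] by blast
  have FC: "g \<in> ?C" if "g \<in> carrier G" "finite (conj_class G g)" for g
    using finite_conj_class_imp_mem_centralizer[OF assms(2,4,6) that] .
  have "conj_class G g \<subseteq> ?C" if "g \<in> carrier G" "finite (conj_class G g)" for g
    using conj_mem_centralizer[OF assms(4) _ FC[OF that]] unfolding conj_class_def by blast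
  moreover have "FC_centre G = ?C"
    using FC finite_conj_class_if_centralizes[OF assms(4) fin]
    unfolding FC_centre_def centralizer_def by blast
  ultimately show ?thesis unfolding centre by blast
qed

end
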